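(* Let $N\ge 2$, $\epsilon>0$, and let $\hat U_0$ be any unitary $N\times N$ matrix. Let $\tilde c(\mu,\nu)=\exp\!\big[-\tfrac12\big(\tfrac{\epsilon N}{\pi}\big)^2\big(\sin^2(\pi\mu/N)+\sin^2(\pi\nu/N)\big)\big]$ for $\mu,\nu\in\{0,\dots,N-1\}$, let $\mathsf{D}_\epsilon$ be the linear map on $M_N(\mathbb{C})$ defined by $\mathsf{D}_\epsilon(\hat T_{(\mu,\nu)})=\tilde c(\mu,\nu)\hat T_{(\mu,\nu)}$ for all $\mu,\nu\in\{0,\dots,N-1\}$, and let $\mathsf{L}_\epsilon=\mathsf{D}_\epsilon\circ\mathsf{U}$, where $\mathsf{U}(\hat\rho)=\hat U_0\hat\rho\hat U_0^\dagger$. Then: (i) $\hat\rho_\infty=\mathbb{I}/N$ satisfies $\mathsf{L}_\epsilon(\hat\rho_\infty)=\hat\rho_\infty$, and $1$ is a non-degenerate eigenvalue of $\mathsf{L}_\epsilon$; (ii) the spectrum of $\mathsf{L}_\epsilon$ is symmetric with respect to the real axis; (iii) the singular values of $\mathsf{L}_\epsilon$ are the numbers $\tilde c(\mu,\nu)$, and every eigenvalue $\lambda$ of $\mathsf{L}_\epsilon$ other than the eigenvalue $1$ associated with $\mathbb{I}/N$ satisfies $$e^{-(\epsilon N/\pi)^2}\;\le\;|\lambda|\;\le\; e^{-\frac12(\epsilon N/\pi)^2\sin^2(\pi/N)}.$$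
   Context: Let $\{|j\rangle\}_{j=0}^{N-1}$ be the standard basis of $\mathbb{C}^N$, indices mod $N$. Let $\hat U|j\rangle=|j+1 \bmod N\rangle$, $\hat V|j\rangle=e^{2\pi\mathrm{i} j/N}|j\rangle$, and define the translation operators $\hat T_{(q,p)}=\hat U^{q}\hat V^{p}e^{\mathrm{i}\pi qp/N}$ for $q,p\in\{0,\dots,N-1\}$; these $N^2$ operators form an orthogonal basis of $M_N(\mathbb{C})$ for the inner product $(\hat A,\hat B)=\mathrm{tr}(\hat A^\dagger\hat B)$, with $\hat T_{(0,0)}=\mathbb{I}$. Singular values and adjoints of linear maps on $M_N(\mathbb{C})$ are taken with respect to this inner product. (Equivalently, $\mathsf{D}_\epsilon(\hat\rho)=\sum_{q,p}c(q,p)\hat T_{(q,p)}\hat\rho\hat T_{(q,p)}^\dagger$ with $c$ the inverse two-dimensional discrete Fourier transform of $\tilde c$.) *)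

theory Defs
  imports Complex_Main "HOL-Library.Multiset" "Jordan_Normal_Form.Char_Poly" "Jordan_Normal_Form.Schur_Decomposition"
begin

definition shiftU :: "nat \<Rightarrow> complex mat" where
  "shiftU N = mat N N (\<lambda>(i,j). if i = (j + 1) mod N then 1 else 0)"

definition clockV :: "nat \<Rightarrow> complex mat" where
  "clockV N = mat N N (\<lambda>(i,j). if i = j then exp (2 * pi * \<i> * of_nat j / of_nat N) else 0)"

definition transl :: "nat \<Rightarrow> nat \<Rightarrow> nat \<Rightarrow> complex mat" where
  "transl N q p = exp (\<i> * pi * of_nat q * of_nat p / of_nat N) \<cdot>\<^sub>m (shiftU N ^\<^sub>m q * clockV N ^\<^sub>m p)"

definition ctilde :: "nat \<Rightarrow> real \<Rightarrow> nat \<Rightarrow> nat \<Rightarrow> real" where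
  "ctilde N \<epsilon> \<mu> \<nu> = exp (- (1/2) * (\<epsilon> * real N / pi)\<^sup>2 *
      ((sin (pi * real \<mu> / real N))\<^sup>2 + (sin (pi * real \<nu> / real N))\<^sup>2))"

definition linear_on_mats :: "nat \<Rightarrow> (complex mat \<Rightarrow> complex mat) \<Rightarrow> bool" where
  "linear_on_mats N L \<longleftrightarrow>
     (\<forall>A \<in> carrier_mat N N. L A \<in> carrier_mat N N) \<and>
     (\<forall>A \<in> carrier_mat N N. \<forall>B \<in> carrier_mat N N. L (A + B) = L A + L B) \<and>
     (\<forall>a. \<forall>A \<in> carrier_mat N N. L (a \<cdot>\<^sub>m A) = a \<cdot>\<^sub>m L A)"

definition unitary_mat :: "nat \<Rightarrow> complex mat \<Rightarrow> bool" where
  "unitary_mat N U \<longleftrightarrow> U \<in> carrier_mat N N \<and> U * mat_adjoint U = 1\<^sub>m N"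

definition is_eigenvalue :: "nat \<Rightarrow> (complex mat \<Rightarrow> complex mat) \<Rightarrow> complex \<Rightarrow> bool" where
  "is_eigenvalue N L lam \<longleftrightarrow> (\<exists>X \<in> carrier_mat N N. X \<noteq> 0\<^sub>m N N \<and> L X = lam \<cdot>\<^sub>m X)"

definition mat_unit :: "nat \<Rightarrow> nat \<Rightarrow> nat \<Rightarrow> complex mat" where
  "mat_unit N i j = mat N N (\<lambda>(k,l). if k = i \<and> l = j then 1 else 0)"

text \<open>Matrix of a linear map on M_N(C) w.r.t. the orthonormal basis of matrix units
  (basis index k corresponds to the unit (k div N, k mod N)).\<close>
definition rep_map :: "nat \<Rightarrow> (complex mat \<Rightarrow> complex mat) \<Rightarrow> complex mat" where
  "rep_map N L = mat (N*N) (N*N)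
     (\<lambda>(k,l). L (mat_unit N (l div N) (l mod N)) $$ (k div N, k mod N))"

definition alg_mult :: "nat \<Rightarrow> (complex mat \<Rightarrow> complex mat) \<Rightarrow> complex \<Rightarrow> nat" where
  "alg_mult N L lam = order lam (char_poly (rep_map N L))"

text \<open>Singular values (with multiplicity) of a linear map on M_N(C) w.r.t. the
  Hilbert--Schmidt inner product: the nonnegative square roots of the eigenvalues of L^* L.
  Since matrix units form an orthonormal basis, the adjoint of L is represented by the
  conjugate transpose of rep_map N L.\<close>
definition singular_values :: "nat \<Rightarrow> (complex mat \<Rightarrow> complex mat) \<Rightarrow> real multiset" where
  "singular_values N L = (THE S. (\<forall>s \<in># S. 0 \<le> s) \<and>
      char_poly (mat_adjoint (rep_map N L) * rep_map N L) =
        (\<Prod>s \<in># S. [:- complex_of_real (s\<^sup>2), 1:]))"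

end

theory Submission
  imports Defs "HOL-Library.Real_Mod"
begin

(* In the orthonormal basis of normalised translation operators T_(q,p) / sqrt N the noise map
   D_eps is the diagonal matrix C of the coefficients c~(q,p), and conjugation by U_0 becomes a
   unitary matrix W; so L_eps is unitarily similar to G = C W. Both fix the identity T_(0,0), and
   c~(0,0) = 1, hence G = diag(1, G') in block form. The singular values are read off from
   G^H G = W^H C^2 W, which is similar to C^2. If G y = lam y then |lam| |y| = |C W y| lies between
   min c~ |y| and, when lam <> 1 forces y_0 = 0, max_{(q,p) <> 0} c~ |y| < |y|; in particular 1 is
   not an eigenvalue of G', so it is a simple root of the characteristic polynomial. Finally c~ is
   even and T_(q,p)^H is a multiple of T_(-q,-p), so D_eps, and with it L_eps, commutes with taking
   adjoints, which makes the spectrum symmetric. *)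

section \<open>Roots of unity and index arithmetic\<close>

definition unit_root :: "nat \<Rightarrow> int \<Rightarrow> complex" where
  "unit_root N k = cis (2 * pi * of_int k / of_nat N)"

lemma unit_root_0 [simp]: "unit_root N 0 = 1"
  by (simp add: unit_root_def)

lemma unit_root_add: "unit_root N (a + b) = unit_root N a * unit_root N b"
  unfolding unit_root_def cis_mult by (simp add: add_divide_distrib distrib_left)

lemma cnj_unit_root: "cnj (unit_root N k) = unit_root N (- k)"
  by (simp add: unit_root_def cis_cnj)

lemma unit_root_mult_power: "unit_root N (int j * k) = unit_root N k ^ j"
  unfolding unit_root_def DeMoivre by (simp add: mult_ac)

lemma unit_root_eq_1_iff:
  assumes "N > 0" shows "unit_root N k = 1 \<longleftrightarrow> int N dvd k"
proof -
  have "2 * pi * of_int k / of_nat N = of_int n * (2 * pi) \<longleftrightarrow> k = int N * n" for n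
  proof -
    have "2 * pi * of_int k / of_nat N = of_int n * (2 * pi) \<longleftrightarrow> real_of_int k = real N * of_int n"
      using assms by (auto simp: field_simps)
    also have "\<dots> \<longleftrightarrow> k = int N * n"
      by (metis of_int_eq_iff of_int_mult of_int_of_nat_eq)
    finally show ?thesis .
  qed
  then show ?thesis
    unfolding unit_root_def cis_eq_1_iff by (auto simp: dvd_def)
qed

lemma unit_root_cong:
  assumes "N > 0" "a mod int N = b mod int N" shows "unit_root N a = unit_root N b"
proof -
  have "int N dvd a - b"
    using assms(2) by (simp add: mod_eq_dvd_iff)
  then obtain m where "a - b = int N * m"
    by (rule dvdE)
  then have "a = b + int N * m"
    by simp
  then show ?thesis
    using unit_root_eq_1_iff[OF assms(1)] by (simp add: unit_root_add)
qed

lemma sum_unit_root: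
  assumes "N > 0"
  shows "(\<Sum>j<N. unit_root N (int j * k)) = (if int N dvd k then of_nat N else 0)"
proof (cases "int N dvd k")
  case True
  then have "unit_root N k = 1"
    using unit_root_eq_1_iff[OF assms] by simp
  then show ?thesis
    using True by (simp add: unit_root_mult_power)
next
  case False
  have "unit_root N k ^ N = 1"
    using unit_root_eq_1_iff[OF assms] by (simp flip: unit_root_mult_power)
  then show ?thesis
    using False unit_root_eq_1_iff[OF assms] geometric_sum[of "unit_root N k" N]
    by (simp add: unit_root_mult_power lessThan_atLeast0)
qed

lemma int_dvd_diff_imp_eq:
  assumes "int N dvd int a - int b" "a < N" "b < N"
  shows "a = b"
proof (rule ccontr)
  assume "a \<noteq> b"
  then have "\<bar>int N\<bar> \<le> \<bar>int a - int b\<bar>"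
    using assms(1) by (intro dvd_imp_le_int) simp_all
  with assms(2,3) show False
    by linarith
qed

lemma mod_add_left_cancel_less:
  fixes j q q' N :: nat
  assumes "q < N" "q' < N" "(j + q) mod N = (j + q') mod N"
  shows "q = q'"
proof -
  have "int (j + q) mod int N = int (j + q') mod int N"
    using assms(3) by (metis of_nat_mod)
  then have "int N dvd int q - int q'"
    by (simp add: mod_eq_dvd_iff)
  then show ?thesis
    using assms(1,2) by (rule int_dvd_diff_imp_eq)
qed

lemma mod_add_eq_iff_mod_add_complement:
  fixes i j q N :: nat
  assumes "q < N" "i < N" "j < N"
  shows "j = (i + q) mod N \<longleftrightarrow> i = (j + (N - q)) mod N"
proof
  assume "j = (i + q) mod N"
  then have "(j + (N - q)) mod N = (i + q + (N - q)) mod N"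
    by (simp add: mod_add_left_eq)
  also have "\<dots> = i"
    using assms by simp
  finally show "i = (j + (N - q)) mod N" ..
next
  assume "i = (j + (N - q)) mod N"
  then have "(i + q) mod N = (j + (N - q) + q) mod N"
    by (simp add: mod_add_left_eq)
  also have "\<dots> = j"
    using assms by simp
  finally show "j = (i + q) mod N" ..
qed

lemma div_mod_less_square:
  fixes k N :: nat
  assumes "k < N * N"
  shows "k div N < N" "k mod N < N"
  using assms by (simp_all add: less_mult_imp_div_less) (cases N; simp)

lemma pair_index_less_square:
  fixes i j N :: nat
  assumes "i < N" "j < N"
  shows "i * N + j < N * N"
proof -
  have "i * N + j < (i + 1) * N"
    using assms by simp
  also have "\<dots> \<le> N * N"
    using assms by (intro mult_le_mono1) simp
  finally show ?thesis .
qed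

lemma bij_betw_div_mod: "bij_betw (\<lambda>k. (k div N, k mod N)) {..<N * N} ({..<N} \<times> {..<(N :: nat)})"
  by (rule bij_betw_byWitness[where f' = "\<lambda>(i,j). i * N + j"])
    (auto simp: div_mod_less_square pair_index_less_square)

lemma sum_div_mod_square:
  fixes N :: nat and f :: "nat \<Rightarrow> nat \<Rightarrow> 'a :: comm_monoid_add"
  shows "(\<Sum>k<N * N. f (k div N) (k mod N)) = (\<Sum>i<N. \<Sum>j<N. f i j)"
  using sum.reindex_bij_betw[OF bij_betw_div_mod, of "\<lambda>(i,j). f i j"]
  by (simp add: sum.cartesian_product)

lemma div_mod_eq_0_iff: "(k :: nat) div N = 0 \<and> k mod N = 0 \<longleftrightarrow> k = 0"
  by (metis div_0 div_mult_mod_eq mod_0 mult_0_right add_0)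

lemma eq_iff_div_mod_eq: "(k :: nat) = l \<longleftrightarrow> k div N = l div N \<and> k mod N = l mod N"
  by (metis div_mult_mod_eq)

section \<open>Adjoints, unitary and diagonal matrices\<close>

lemma index_mult_mat_sum:
  assumes "A \<in> carrier_mat n m" "B \<in> carrier_mat m k" "i < n" "j < k"
  shows "(A * B) $$ (i,j) = (\<Sum>l<m. A $$ (i,l) * B $$ (l,j))"
  using assms by (simp add: scalar_prod_def lessThan_atLeast0)

lemma index_mult_mat_vec_sum:
  assumes "A \<in> carrier_mat n m" "v \<in> carrier_vec m" "i < n"
  shows "(A *\<^sub>v v) $ i = (\<Sum>l<m. A $$ (i,l) * v $ l)"
  using assms by (simp add: scalar_prod_def lessThan_atLeast0)

(* Entries of products are expanded with the two lemmas above; the library's default rewriting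
   to row-column scalar products would preempt them. *)
declare index_mult_mat(1) [simp del] index_mult_mat_vec [simp del]

lemma smult_smult_mat: "a \<cdot>\<^sub>m (b \<cdot>\<^sub>m A) = (a * b :: 'a :: semigroup_mult) \<cdot>\<^sub>m A"
  by (rule eq_matI) (simp_all add: mult.assoc)

lemma carrier_mat_adjoint [simp]: "A \<in> carrier_mat n m \<Longrightarrow> mat_adjoint A \<in> carrier_mat m n"
  unfolding mat_adjoint_def by auto

lemma dim_mat_adjoint [simp]:
  "dim_row (mat_adjoint A) = dim_col A" "dim_col (mat_adjoint A) = dim_row A"
  unfolding mat_adjoint_def by auto

lemma index_mat_adjoint:
  "A \<in> carrier_mat n m \<Longrightarrow> i < m \<Longrightarrow> j < n \<Longrightarrow> mat_adjoint A $$ (i,j) = cnj (A $$ (j,i))"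
  unfolding mat_adjoint_def by (simp add: mat_of_rows_def)

lemma adjoint_adjoint_mat [simp]:
  "A \<in> carrier_mat n m \<Longrightarrow> mat_adjoint (mat_adjoint A) = (A :: complex mat)"
  by (rule eq_matI) (auto simp: index_mat_adjoint[of _ m n] index_mat_adjoint[of _ n m])

lemma adjoint_zero_mat [simp]: "mat_adjoint (0\<^sub>m n m :: complex mat) = 0\<^sub>m m n"
  by (rule eq_matI) (auto simp: index_mat_adjoint[OF zero_carrier_mat])

lemma adjoint_add_mat:
  fixes A B :: "complex mat"
  assumes "A \<in> carrier_mat n m" "B \<in> carrier_mat n m"
  shows "mat_adjoint (A + B) = mat_adjoint A + mat_adjoint B"
  by (rule eq_matI) (use assms in \<open>auto simp: index_mat_adjoint[of _ n m]\<close>)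

lemma adjoint_smult_mat:
  fixes A :: "complex mat"
  assumes "A \<in> carrier_mat n m"
  shows "mat_adjoint (a \<cdot>\<^sub>m A) = cnj a \<cdot>\<^sub>m mat_adjoint A"
  by (rule eq_matI) (use assms in \<open>auto simp: index_mat_adjoint[of _ n m]\<close>)

lemma adjoint_mult_mat:
  fixes A B :: "complex mat"
  assumes A: "A \<in> carrier_mat n m" and B: "B \<in> carrier_mat m k"
  shows "mat_adjoint (A * B) = mat_adjoint B * mat_adjoint A"
proof (rule eq_matI)
  fix i j assume "i < dim_row (mat_adjoint B * mat_adjoint A)" "j < dim_col (mat_adjoint B * mat_adjoint A)"
  then have i: "i < k" and j: "j < n"
    using A B by auto
  have "mat_adjoint (A * B) $$ (i,j) = (\<Sum>l<m. cnj (A $$ (j,l)) * cnj (B $$ (l,i)))"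
    using A B i j by (simp add: index_mat_adjoint[of _ n k] index_mult_mat_sum cnj_sum)
  also have "\<dots> = (mat_adjoint B * mat_adjoint A) $$ (i,j)"
    using A B i j
    by (simp add: index_mult_mat_sum[of _ k m _ n] index_mat_adjoint[of _ n m] index_mat_adjoint[of _ m k]
        mult.commute)
  finally show "mat_adjoint (A * B) $$ (i,j) = (mat_adjoint B * mat_adjoint A) $$ (i,j)" .
qed (use A B in auto)

lemma unitary_mat_carrier: "unitary_mat n U \<Longrightarrow> U \<in> carrier_mat n n"
  unfolding unitary_mat_def by simp

lemma unitary_mat_adjoint_mult: "unitary_mat n U \<Longrightarrow> mat_adjoint U * U = 1\<^sub>m n"
  unfolding unitary_mat_def by (meson carrier_mat_adjoint mat_mult_left_right_inverse)

lemma unitary_matI: "U \<in> carrier_mat n n \<Longrightarrow> mat_adjoint U * U = 1\<^sub>m n \<Longrightarrow> unitary_mat n U"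
  unfolding unitary_mat_def by (meson carrier_mat_adjoint mat_mult_left_right_inverse)

lemma unitary_mat_adjoint:
  assumes "unitary_mat n U" shows "unitary_mat n (mat_adjoint U)"
  using unitary_mat_adjoint_mult[OF assms] unitary_mat_carrier[OF assms] by (simp add: unitary_mat_def)

lemma unitary_mat_mult:
  assumes U: "unitary_mat n U" and V: "unitary_mat n V"
  shows "unitary_mat n (U * V)"
proof -
  have [simp]: "U \<in> carrier_mat n n" "V \<in> carrier_mat n n"
    using U V by (simp_all add: unitary_mat_carrier)
  have "U * V * mat_adjoint (U * V) = U * (V * mat_adjoint V * mat_adjoint U)"
    using mult_carrier_mat[of "mat_adjoint V" n n "mat_adjoint U" n]
    by (simp add: adjoint_mult_mat[of U n n V n] assoc_mult_mat[of U n n V n _ n]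
        assoc_mult_mat[of V n n "mat_adjoint V" n "mat_adjoint U" n])
  also have "\<dots> = U * mat_adjoint U"
    using V left_mult_one_mat[of "mat_adjoint U" n n] by (simp add: unitary_mat_def)
  also have "\<dots> = 1\<^sub>m n"
    using U by (simp add: unitary_mat_def)
  finally show ?thesis
    by (simp add: unitary_mat_def mult_carrier_mat[of U n n V n])
qed

lemma unitary_mat_col_orthonormal:
  assumes "unitary_mat n U" "a < n" "b < n"
  shows "(\<Sum>i<n. cnj (U $$ (i,a)) * U $$ (i,b)) = (if a = b then 1 else 0)"
proof -
  have "U \<in> carrier_mat n n"
    using assms(1) by (rule unitary_mat_carrier)
  then have "(mat_adjoint U * U) $$ (a,b) = (\<Sum>i<n. cnj (U $$ (i,a)) * U $$ (i,b))"
    using assms by (simp add: index_mult_mat_sum[of _ n n] index_mat_adjoint)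
  then show ?thesis
    using unitary_mat_adjoint_mult[OF assms(1)] assms by simp
qed

lemma unitary_matI_orthonormal:
  assumes "A \<in> carrier_mat n n"
    and "\<And>a b. a < n \<Longrightarrow> b < n \<Longrightarrow> (\<Sum>k<n. cnj (A $$ (k,a)) * A $$ (k,b)) = (if a = b then 1 else 0)"
  shows "unitary_mat n A"
proof (rule unitary_matI)
  show "mat_adjoint A * A = 1\<^sub>m n"
    using assms by (intro eq_matI) (simp_all add: index_mult_mat_sum[of _ n n _ n] index_mat_adjoint)
qed (rule assms(1))

definition vec_norm_sq :: "complex vec \<Rightarrow> real" where
  "vec_norm_sq y = (\<Sum>i<dim_vec y. (cmod (y $ i))\<^sup>2)"

lemma of_real_vec_norm_sq: "of_real (vec_norm_sq y) = (\<Sum>i<dim_vec y. cnj (y $ i) * y $ i)"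
  unfolding vec_norm_sq_def of_real_sum complex_norm_square by (simp add: mult.commute)

lemma vec_norm_sq_smult: "vec_norm_sq (a \<cdot>\<^sub>v y) = (cmod a)\<^sup>2 * vec_norm_sq y"
  unfolding vec_norm_sq_def by (simp add: sum_distrib_left norm_mult power_mult_distrib)

lemma vec_norm_sq_pos:
  assumes "y \<in> carrier_vec n" "y \<noteq> 0\<^sub>v n"
  shows "vec_norm_sq y > 0"
proof -
  obtain i where i: "i < n" "y $ i \<noteq> 0"
    using assms by (metis eq_vecI carrier_vecD index_zero_vec)
  have "(cmod (y $ i))\<^sup>2 \<le> vec_norm_sq y"
    unfolding vec_norm_sq_def using assms(1) i by (intro member_le_sum) auto
  moreover have "(cmod (y $ i))\<^sup>2 > 0"
    using i by simp
  ultimately show ?thesis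
    by linarith
qed

lemma vec_norm_sq_unitary:
  assumes A: "unitary_mat n A" and y: "y \<in> carrier_vec n"
  shows "vec_norm_sq (A *\<^sub>v y) = vec_norm_sq y"
proof -
  have A_carrier: "A \<in> carrier_mat n n"
    using A by (rule unitary_mat_carrier)
  have entry: "cnj ((A *\<^sub>v y) $ i) * (A *\<^sub>v y) $ i
      = (\<Sum>j<n. \<Sum>k<n. cnj (y $ j) * y $ k * (cnj (A $$ (i,j)) * A $$ (i,k)))" if "i < n" for i
    using that by (simp add: index_mult_mat_vec_sum[OF A_carrier y] cnj_sum sum_product mult_ac)
      (rule sum.swap)
  have "of_real (vec_norm_sq (A *\<^sub>v y))
      = (\<Sum>i<n. \<Sum>j<n. \<Sum>k<n. cnj (y $ j) * y $ k * (cnj (A $$ (i,j)) * A $$ (i,k)))"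
    unfolding of_real_vec_norm_sq using A_carrier by (simp add: entry)
  also have "\<dots> = (\<Sum>j<n. \<Sum>k<n. \<Sum>i<n. cnj (y $ j) * y $ k * (cnj (A $$ (i,j)) * A $$ (i,k)))"
    by (subst sum.swap) (rule sum.cong[OF refl], rule sum.swap)
  also have "\<dots> = (\<Sum>j<n. \<Sum>k<n. cnj (y $ j) * y $ k * (\<Sum>i<n. cnj (A $$ (i,j)) * A $$ (i,k)))"
    by (simp add: sum_distrib_left)
  also have "\<dots> = (\<Sum>j<n. cnj (y $ j) * y $ j)"
    by (intro sum.cong refl) (simp add: unitary_mat_col_orthonormal[OF A] if_distrib[of "(*) _"] cong: if_cong)
  also have "\<dots> = of_real (vec_norm_sq y)"
    unfolding of_real_vec_norm_sq using y by simp
  finally show ?thesis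
    by (simp only: of_real_eq_iff)
qed

definition diag_real_mat :: "nat \<Rightarrow> (nat \<Rightarrow> real) \<Rightarrow> complex mat" where
  "diag_real_mat n d = mat n n (\<lambda>(i,j). if i = j then complex_of_real (d i) else 0)"

lemma diag_real_mat_carrier [simp]: "diag_real_mat n d \<in> carrier_mat n n"
  by (simp add: diag_real_mat_def)

lemma dim_diag_real_mat [simp]:
  "dim_row (diag_real_mat n d) = n" "dim_col (diag_real_mat n d) = n"
  by (simp_all add: diag_real_mat_def)

lemma index_diag_real_mat [simp]:
  "i < n \<Longrightarrow> j < n \<Longrightarrow> diag_real_mat n d $$ (i,j) = (if i = j then complex_of_real (d i) else 0)"
  by (simp add: diag_real_mat_def)

lemma index_diag_real_mat_mult:
  assumes "A \<in> carrier_mat n m" "i < n" "j < m"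
  shows "(diag_real_mat n d * A) $$ (i,j) = d i * A $$ (i,j)"
  using assms by (simp add: index_mult_mat_sum[of _ n n _ m] diag_real_mat_def if_distrib if_distribR
      cong: if_cong)

lemma index_diag_real_mat_mult_vec:
  assumes "v \<in> carrier_vec n" "i < n"
  shows "(diag_real_mat n d *\<^sub>v v) $ i = d i * v $ i"
  using assms by (simp add: index_mult_mat_vec_sum[of _ n n] diag_real_mat_def if_distrib if_distribR
      cong: if_cong)

lemma char_poly_diag_real_mat: "char_poly (diag_real_mat n d) = (\<Prod>i<n. [:- complex_of_real (d i), 1:])"
proof -
  have "char_poly (diag_real_mat n d) = (\<Prod>a\<leftarrow>diag_mat (diag_real_mat n d). [:- a, 1:])"
    by (rule char_poly_upper_triangular) (auto simp: upper_triangular_def diag_real_mat_def)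
  also have "\<dots> = (\<Prod>i\<leftarrow>[0..<n]. [:- complex_of_real (d i), 1:])"
    unfolding diag_mat_def map_map
    by (intro arg_cong[where f = prod_list] map_cong) (auto simp: diag_real_mat_def)
  also have "\<dots> = (\<Prod>i<n. [:- complex_of_real (d i), 1:])"
    by (induction n) (simp_all add: lessThan_Suc mult.commute)
  finally show ?thesis .
qed

lemma adjoint_diag_real_mat: "mat_adjoint (diag_real_mat n d) = diag_real_mat n d"
  by (rule eq_matI) (auto simp: index_mat_adjoint[of _ n n] diag_real_mat_def)

lemma diag_real_mat_mult: "diag_real_mat n d * diag_real_mat n e = diag_real_mat n (\<lambda>i. d i * e i)"
  by (rule eq_matI) (simp_all add: index_diag_real_mat_mult[of _ n n])

definition unitary_conj :: "complex mat \<Rightarrow> complex mat \<Rightarrow> complex mat" where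
  "unitary_conj U \<rho> = U * \<rho> * mat_adjoint U"

lemma unitary_conj_one: "unitary_mat N U \<Longrightarrow> unitary_conj U (1\<^sub>m N) = 1\<^sub>m N"
  by (simp add: unitary_conj_def unitary_mat_def right_mult_one_mat[of U N N])

lemma unitary_conj_adjoint:
  assumes U: "U \<in> carrier_mat N N" and X: "X \<in> carrier_mat N N"
  shows "unitary_conj U (mat_adjoint X) = mat_adjoint (unitary_conj U X)"
  using U X
  by (simp add: unitary_conj_def adjoint_mult_mat[of _ N N _ N] mult_carrier_mat[of _ N N _ N]
      assoc_mult_mat[of _ N N _ N _ N])

lemma unitary_conj_mult:
  assumes F: "unitary_mat n F" and A: "A \<in> carrier_mat n n" and B: "B \<in> carrier_mat n n"
  shows "unitary_conj F A * unitary_conj F B = unitary_conj F (A * B)"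
proof -
  have [simp]: "F \<in> carrier_mat n n"
    using F by (rule unitary_mat_carrier)
  have "unitary_conj F A * unitary_conj F B = F * (A * (mat_adjoint F * F) * B) * mat_adjoint F"
    using A B by (simp add: unitary_conj_def mult_carrier_mat[of _ n n _ n] assoc_mult_mat[of _ n n _ n _ n])
  then show ?thesis
    using A B by (simp add: unitary_mat_adjoint_mult[OF F] unitary_conj_def right_mult_one_mat[of A n n])
qed

lemma similar_mat_unitary_conj:
  assumes F: "unitary_mat n F" and B: "B \<in> carrier_mat n n"
  shows "similar_mat (unitary_conj F B) B"
  unfolding similar_mat_def unitary_conj_def
  using F B unitary_mat_adjoint_mult[OF F] unitary_mat_carrier[OF F]
  by (intro exI[of _ F] exI[of _ "mat_adjoint F"] similar_mat_witI[of _ _ n])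
    (auto simp: unitary_mat_def mult_carrier_mat[of _ n n _ n])

lemma unitary_conj_adjoint_conj:
  assumes F: "unitary_mat n F" and R: "R \<in> carrier_mat n n"
  shows "unitary_conj F (mat_adjoint F * R * F) = R"
proof -
  have [simp]: "F \<in> carrier_mat n n"
    using F by (rule unitary_mat_carrier)
  have "unitary_conj F (mat_adjoint F * R * F) = F * mat_adjoint F * R * (F * mat_adjoint F)"
    using R by (simp add: unitary_conj_def mult_carrier_mat[of _ n n _ n] assoc_mult_mat[of _ n n _ n _ n])
  then show ?thesis
    using F R by (simp add: unitary_mat_def)
qed

section \<open>A nonnegative diagonal matrix times a unitary matrix fixing the first basis vector\<close>

locale diag_unitary =
  fixes n :: nat and c :: "nat \<Rightarrow> real" and W :: "complex mat"
  assumes n_pos: "n > 0"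
    and unitary_W: "unitary_mat n W"
    and W_unit_vec_0: "W *\<^sub>v unit_vec n 0 = unit_vec n 0"
    and c_0: "c 0 = 1"
    and c_nonneg: "\<And>i. i < n \<Longrightarrow> 0 \<le> c i"
begin

abbreviation G :: "complex mat" where
  "G \<equiv> diag_real_mat n c * W"

lemma W_carrier [simp]: "W \<in> carrier_mat n n"
  using unitary_W by (rule unitary_mat_carrier)

lemma dim_W [simp]: "dim_row W = n" "dim_col W = n"
  using W_carrier by (simp_all only: carrier_matD)

lemma G_carrier [simp]: "G \<in> carrier_mat n n"
  by (simp add: mult_carrier_mat[of _ n n _ n])

lemma index_W_col_0: "i < n \<Longrightarrow> W $$ (i,0) = (if i = 0 then 1 else 0)"
  using arg_cong[OF W_unit_vec_0, of "\<lambda>v. v $ i"] n_pos by (simp add: index_mult_mat_vec)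

lemma index_W_row_0:
  assumes "j < n" shows "W $$ (0,j) = (if j = 0 then 1 else 0)"
proof -
  have "(\<Sum>i<n. cnj (W $$ (i,0)) * W $$ (i,j)) = W $$ (0,j)"
    using n_pos by (simp add: index_W_col_0 if_distrib if_distribR cong: if_cong)
  then show ?thesis
    using unitary_mat_col_orthonormal[OF unitary_W n_pos assms] by simp
qed

lemma index_W_mult_vec_0: "y \<in> carrier_vec n \<Longrightarrow> (W *\<^sub>v y) $ 0 = y $ 0"
  using n_pos by (simp add: index_mult_mat_vec_sum[of _ n n] index_W_row_0 if_distrib if_distribR
      cong: if_cong)

lemma index_G_mult_vec:
  "y \<in> carrier_vec n \<Longrightarrow> i < n \<Longrightarrow> (G *\<^sub>v y) $ i = c i * (W *\<^sub>v y) $ i"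
  by (simp add: assoc_mult_mat_vec[of _ n n _ n] index_diag_real_mat_mult_vec[of _ n]
      mult_mat_vec_carrier[OF W_carrier])

lemma eigenvalue_norm_sq:
  assumes y: "y \<in> carrier_vec n" and ev: "G *\<^sub>v y = lam \<cdot>\<^sub>v y"
  shows "(cmod lam)\<^sup>2 * vec_norm_sq y = (\<Sum>i<n. (c i)\<^sup>2 * (cmod ((W *\<^sub>v y) $ i))\<^sup>2)"
proof -
  have "(cmod lam)\<^sup>2 * vec_norm_sq y = vec_norm_sq (G *\<^sub>v y)"
    unfolding ev vec_norm_sq_smult ..
  also have "\<dots> = (\<Sum>i<n. (c i)\<^sup>2 * (cmod ((W *\<^sub>v y) $ i))\<^sup>2)"
    unfolding vec_norm_sq_def using y c_nonneg
    by (intro sum.cong) (simp_all add: index_G_mult_vec norm_mult power_mult_distrib)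
  finally show ?thesis .
qed

lemma eigenvalue_lower_bound:
  assumes "eigenvector G y lam"
    and cmin: "0 \<le> cmin" "\<And>i. i < n \<Longrightarrow> cmin \<le> c i"
  shows "cmin \<le> cmod lam"
proof -
  have y: "y \<in> carrier_vec n" "y \<noteq> 0\<^sub>v n" and ev: "G *\<^sub>v y = lam \<cdot>\<^sub>v y"
    using assms(1) by (simp_all add: eigenvector_def)
  have "cmin\<^sup>2 * vec_norm_sq y = cmin\<^sup>2 * vec_norm_sq (W *\<^sub>v y)"
    using vec_norm_sq_unitary[OF unitary_W y(1)] by simp
  also have "\<dots> = (\<Sum>i<n. cmin\<^sup>2 * (cmod ((W *\<^sub>v y) $ i))\<^sup>2)"
    by (simp add: vec_norm_sq_def sum_distrib_left)
  also have "\<dots> \<le> (\<Sum>i<n. (c i)\<^sup>2 * (cmod ((W *\<^sub>v y) $ i))\<^sup>2)"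
    using cmin by (intro sum_mono mult_right_mono power_mono) auto
  also have "\<dots> = (cmod lam)\<^sup>2 * vec_norm_sq y"
    using eigenvalue_norm_sq[OF y(1) ev] by simp
  finally have "cmin\<^sup>2 \<le> (cmod lam)\<^sup>2"
    using vec_norm_sq_pos[OF y] by simp
  then show ?thesis
    by (rule power2_le_imp_le) simp
qed

lemma eigenvector_index_0:
  assumes "eigenvector G y lam" and "lam \<noteq> 1"
  shows "y $ 0 = 0"
proof -
  have y: "y \<in> carrier_vec n" and ev: "G *\<^sub>v y = lam \<cdot>\<^sub>v y"
    using assms(1) by (simp_all add: eigenvector_def)
  have "lam * y $ 0 = y $ 0"
    using arg_cong[OF ev, of "\<lambda>v. v $ 0"] y n_pos by (simp add: index_G_mult_vec index_W_mult_vec_0 c_0)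
  then show ?thesis
    using \<open>lam \<noteq> 1\<close> by (metis mult_cancel_right2)
qed

lemma eigenvalue_upper_bound:
  assumes "eigenvector G y lam" and y_0: "y $ 0 = 0"
    and cmax: "0 \<le> cmax" "\<And>i. 0 < i \<Longrightarrow> i < n \<Longrightarrow> c i \<le> cmax"
  shows "cmod lam \<le> cmax"
proof -
  have y: "y \<in> carrier_vec n" "y \<noteq> 0\<^sub>v n" and ev: "G *\<^sub>v y = lam \<cdot>\<^sub>v y"
    using assms(1) by (simp_all add: eigenvector_def)
  have "(cmod lam)\<^sup>2 * vec_norm_sq y = (\<Sum>i<n. (c i)\<^sup>2 * (cmod ((W *\<^sub>v y) $ i))\<^sup>2)"
    using eigenvalue_norm_sq[OF y(1) ev] .
  also have "\<dots> \<le> (\<Sum>i<n. cmax\<^sup>2 * (cmod ((W *\<^sub>v y) $ i))\<^sup>2)"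
  proof (intro sum_mono)
    fix i assume "i \<in> {..<n}"
    then show "(c i)\<^sup>2 * (cmod ((W *\<^sub>v y) $ i))\<^sup>2 \<le> cmax\<^sup>2 * (cmod ((W *\<^sub>v y) $ i))\<^sup>2"
      using cmax c_nonneg index_W_mult_vec_0[OF y(1)] y_0
      by (cases "i = 0") (auto intro!: mult_right_mono power_mono)
  qed
  also have "\<dots> = cmax\<^sup>2 * vec_norm_sq (W *\<^sub>v y)"
    by (simp add: vec_norm_sq_def sum_distrib_left)
  also have "\<dots> = cmax\<^sup>2 * vec_norm_sq y"
    using vec_norm_sq_unitary[OF unitary_W y(1)] by simp
  finally have "(cmod lam)\<^sup>2 \<le> cmax\<^sup>2"
    using vec_norm_sq_pos[OF y] by simp
  then show ?thesis
    using cmax(1) by (rule power2_le_imp_le)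
qed

definition G_minor :: "complex mat" where
  "G_minor = mat (n - 1) (n - 1) (\<lambda>(i,j). G $$ (Suc i, Suc j))"

lemma G_minor_carrier: "G_minor \<in> carrier_mat (n - 1) (n - 1)"
  by (simp add: G_minor_def)

lemma G_four_block: "G = four_block_mat (1\<^sub>m 1) (0\<^sub>m 1 (n - 1)) (0\<^sub>m (n - 1) 1) G_minor"
  using n_pos
  by (intro eq_matI) (auto simp: index_diag_real_mat_mult[of _ n n] index_W_row_0 index_W_col_0 c_0 G_minor_def)

lemma char_poly_G: "char_poly G = [:-1, 1:] * char_poly G_minor"
proof -
  have "char_poly G = char_poly (1\<^sub>m 1) * char_poly G_minor"
    by (subst G_four_block, rule char_poly_four_block_zeros_col) (use G_minor_carrier in simp_all)
  also have "char_poly (1\<^sub>m 1 :: complex mat) = [:-1, 1:]"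
    by (subst char_poly_upper_triangular[of _ 1]) (auto simp: upper_triangular_def diag_mat_def)
  finally show ?thesis .
qed

lemma G_minor_not_eigenvalue_1:
  assumes cmax: "cmax < 1" "0 \<le> cmax" "\<And>i. 0 < i \<Longrightarrow> i < n \<Longrightarrow> c i \<le> cmax"
  shows "\<not> eigenvalue G_minor 1"
proof
  assume "eigenvalue G_minor 1"
  then obtain v where v: "v \<in> carrier_vec (n - 1)" "v \<noteq> 0\<^sub>v (n - 1)" "G_minor *\<^sub>v v = v"
    using G_minor_carrier by (auto simp: eigenvalue_def eigenvector_def)
  define y where "y = 0\<^sub>v 1 @\<^sub>v v"
  have "G *\<^sub>v y = y"
    unfolding y_def using v G_minor_carrier by (subst G_four_block) (simp add: mult_mat_vec_split)
  moreover have "y \<noteq> 0\<^sub>v n"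
  proof -
    have "0\<^sub>v 1 @\<^sub>v 0\<^sub>v (n - 1) = (0\<^sub>v n :: complex vec)"
      using n_pos by (intro eq_vecI) auto
    then show ?thesis
      using v(2) append_vec_eq[of "0\<^sub>v 1" 1 "0\<^sub>v 1" v "0\<^sub>v (n - 1)"] by (auto simp: y_def)
  qed
  moreover have "y \<in> carrier_vec n"
    using append_carrier_vec[OF zero_carrier_vec[of 1] v(1)] n_pos by (simp add: y_def)
  ultimately have "eigenvector G y 1"
    by (simp add: eigenvector_def)
  moreover have "y $ 0 = 0"
    by (simp add: y_def)
  ultimately have "cmod 1 \<le> cmax"
    using cmax(2,3) by (rule eigenvalue_upper_bound)
  then show False
    using cmax(1) by simp
qed

lemma order_1_char_poly_G:
  assumes "cmax < 1" "0 \<le> cmax" "\<And>i. 0 < i \<Longrightarrow> i < n \<Longrightarrow> c i \<le> cmax"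
  shows "order 1 (char_poly G) = 1"
proof -
  have "order 1 (char_poly G_minor) = 0"
    using G_minor_not_eigenvalue_1[OF assms] eigenvalue_root_char_poly[OF G_minor_carrier, of 1]
    by (intro order_0I) simp
  have "coeff (char_poly G_minor) (n - 1) = 1"
    using degree_monic_char_poly[OF G_minor_carrier] by simp
  then have "[:-1, 1:] * char_poly G_minor \<noteq> 0"
    by (simp only: mult_eq_0_iff) auto
  then have "order 1 (char_poly G) = order 1 [:-1, 1::complex:] + order 1 (char_poly G_minor)"
    unfolding char_poly_G by (rule order_mult)
  with \<open>order 1 (char_poly G_minor) = 0\<close> show ?thesis
    by simp
qed

lemma char_poly_adjoint_G_mult_G:
  "char_poly (mat_adjoint G * G) = (\<Prod>i<n. [:- complex_of_real ((c i)\<^sup>2), 1:])"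
proof -
  let ?C = "diag_real_mat n c"
  have "mat_adjoint G * G = mat_adjoint W * (?C * ?C) * W"
    by (simp add: adjoint_mult_mat[of _ n n _ n] adjoint_diag_real_mat assoc_mult_mat[of _ n n _ n _ n]
        mult_carrier_mat[of _ n n _ n])
  also have "?C * ?C = diag_real_mat n (\<lambda>i. (c i)\<^sup>2)"
    by (simp add: diag_real_mat_mult power2_eq_square)
  finally have "similar_mat (mat_adjoint G * G) (diag_real_mat n (\<lambda>i. (c i)\<^sup>2))"
    unfolding similar_mat_def
    by (intro exI[of _ "mat_adjoint W"] exI[of _ W] similar_mat_witI[of _ _ n])
      (auto simp: unitary_mat_adjoint_mult[OF unitary_W] unitary_W[unfolded unitary_mat_def]
        mult_carrier_mat[of _ n n _ n] assoc_mult_mat[of _ n n _ n _ n])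
  then show ?thesis
    by (simp add: char_poly_similar char_poly_diag_real_mat)
qed

end

section \<open>Clock, shift and translation operators\<close>

lemma shiftU_carrier [simp]: "shiftU N \<in> carrier_mat N N"
  by (simp add: shiftU_def)

lemma clockV_carrier [simp]: "clockV N \<in> carrier_mat N N"
  by (simp add: clockV_def)

lemma dim_shiftU_clockV [simp]:
  "dim_row (shiftU N) = N" "dim_col (shiftU N) = N" "dim_row (clockV N) = N" "dim_col (clockV N) = N"
  by (simp_all add: shiftU_def clockV_def)

lemma index_clockV:
  assumes "i < N" "j < N"
  shows "clockV N $$ (i,j) = (if i = j then unit_root N (int j) else 0)"
proof -
  have "2 * pi * \<i> * of_nat j / of_nat N = \<i> * complex_of_real (2 * pi * of_int (int j) / of_nat N)"
    by simp
  then show ?thesis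
    using assms by (simp only: clockV_def unit_root_def cis_conv_exp index_mat split)
qed

lemma index_shiftU_pow:
  "i < N \<Longrightarrow> j < N \<Longrightarrow> (shiftU N ^\<^sub>m q) $$ (i,j) = (if i = (j + q) mod N then 1 else 0)"
proof (induction q arbitrary: i j)
  case 0
  then show ?case
    by simp
next
  case (Suc q)
  have "(shiftU N ^\<^sub>m Suc q) $$ (i,j) = (\<Sum>l<N. (shiftU N ^\<^sub>m q) $$ (i,l) * shiftU N $$ (l,j))"
    using Suc.prems by (simp add: index_mult_mat_sum[of _ N N _ N])
  also have "\<dots> = (if i = ((j + 1) mod N + q) mod N then 1 else 0)"
    using Suc by (simp add: shiftU_def if_distrib if_distribR cong: if_cong)
  finally show ?case
    by (simp add: mod_add_left_eq)
qed

lemma index_clockV_pow: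
  "i < N \<Longrightarrow> j < N \<Longrightarrow> (clockV N ^\<^sub>m p) $$ (i,j) = (if i = j then unit_root N (int (j * p)) else 0)"
proof (induction p arbitrary: i j)
  case 0
  then show ?case
    by simp
next
  case (Suc p)
  have "(clockV N ^\<^sub>m Suc p) $$ (i,j) = (\<Sum>l<N. (clockV N ^\<^sub>m p) $$ (i,l) * clockV N $$ (l,j))"
    using Suc.prems by (simp add: index_mult_mat_sum[of _ N N _ N])
  also have "\<dots> = (if i = j then unit_root N (int (j * p)) * unit_root N (int j) else 0)"
    using Suc by (simp add: index_clockV if_distrib if_distribR cong: if_cong)
  finally show ?case
    by (simp add: unit_root_add[symmetric] algebra_simps)
qed

lemma transl_carrier [simp]: "transl N q p \<in> carrier_mat N N"
  by (simp add: transl_def mult_carrier_mat[of _ N N _ N])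

lemma dim_transl [simp]: "dim_row (transl N q p) = N" "dim_col (transl N q p) = N"
  using transl_carrier[of N q p] by (simp_all only: carrier_matD)

lemma index_transl:
  assumes "i < N" "j < N"
  shows "transl N q p $$ (i,j)
    = cis (pi * q * p / N) * (if i = (j + q) mod N then unit_root N (int (j * p)) else 0)"
proof -
  have "(shiftU N ^\<^sub>m q * clockV N ^\<^sub>m p) $$ (i,j)
      = (\<Sum>l<N. (shiftU N ^\<^sub>m q) $$ (i,l) * (clockV N ^\<^sub>m p) $$ (l,j))"
    using assms by (simp add: index_mult_mat_sum[of _ N N _ N])
  also have "\<dots> = (\<Sum>l<N. if l = j then (if i = (j + q) mod N then unit_root N (int (j * p)) else 0) else 0)"
    using assms by (intro sum.cong) (auto simp: index_shiftU_pow index_clockV_pow)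
  also have "\<dots> = (if i = (j + q) mod N then unit_root N (int (j * p)) else 0)"
    using assms by simp
  finally have "(shiftU N ^\<^sub>m q * clockV N ^\<^sub>m p) $$ (i,j)
      = (if i = (j + q) mod N then unit_root N (int (j * p)) else 0)" .
  moreover have "exp (\<i> * pi * of_nat q * of_nat p / of_nat N) = cis (pi * q * p / N)"
    by (simp add: cis_conv_exp mult.assoc)
  ultimately show ?thesis
    using assms by (simp add: transl_def)
qed

lemma transl_0_0: "N > 0 \<Longrightarrow> transl N 0 0 = 1\<^sub>m N"
  by (rule eq_matI) (auto simp: index_transl)

lemma transl_orthogonal:
  assumes "N > 0" "q < N" "p < N" "q' < N" "p' < N"
  shows "(\<Sum>i<N. \<Sum>j<N. cnj (transl N q p $$ (i,j)) * transl N q' p' $$ (i,j))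
       = (if q = q' \<and> p = p' then of_nat N else 0)"
proof -
  define z where "z j = cnj (cis (pi * q * p / N)) * cis (pi * q' * p' / N) * unit_root N (int j * (int p' - int p))"
    for j
  have "(\<Sum>i<N. \<Sum>j<N. cnj (transl N q p $$ (i,j)) * transl N q' p' $$ (i,j))
      = (\<Sum>j<N. \<Sum>i<N. if i = (j + q) mod N \<and> q = q' then z j else 0)"
    using assms mod_add_left_cancel_less[OF assms(2,4)]
    by (subst sum.swap) (intro sum.cong refl, auto simp: index_transl z_def cnj_unit_root
        unit_root_add[symmetric] algebra_simps)
  also have "\<dots> = (if q = q' then \<Sum>j<N. z j else 0)"
    by simp
  also have "\<dots> = (if q = q' \<and> p = p' then of_nat N else 0)"
  proof (cases "q = q'")
    case True
    have "(\<Sum>j<N. z j) = cnj (cis (pi * q * p / N)) * cis (pi * q' * p' / N)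
        * (if int N dvd int p' - int p then of_nat N else 0)"
      unfolding z_def by (simp add: sum_distrib_left[symmetric] sum_unit_root[OF assms(1)])
    also have "\<dots> = (if p = p' then of_nat N else 0)"
      using True int_dvd_diff_imp_eq[OF _ assms(5,3)] by (auto simp: cis_cnj cis_mult)
    finally show ?thesis
      using True by simp
  qed simp
  finally show ?thesis .
qed

lemma cnj_unit_root_shift:
  assumes "N > 0" "p < N" "j = (i + q) mod N"
  shows "cnj (unit_root N (int (i * p)))
    = unit_root N (int q * int p) * unit_root N (int (j * ((N - p) mod N)))"
proof -
  let ?p = "(N - p) mod N"
  have j: "int j mod int N = (int i + int q) mod int N"
    using assms(3) by (simp add: zmod_int)
  have p: "int ?p mod int N = (int N - int p) mod int N"
    using assms(2) by (simp add: zmod_int of_nat_diff)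
  have "(int q * int p + int j * int ?p) mod int N
      = (int q * int p + (int i + int q) * (int N - int p)) mod int N"
    using j p by (intro mod_add_cong mod_mult_cong) simp_all
  also have "\<dots> = (- (int i * int p) + int N * (int i + int q)) mod int N"
    by (simp add: algebra_simps)
  also have "\<dots> = (- (int i * int p)) mod int N"
    by (rule mod_mult_self2)
  finally have "unit_root N (int q * int p + int j * int ?p) = unit_root N (- (int i * int p))"
    using assms(1) by (intro unit_root_cong) simp_all
  then show ?thesis
    by (simp add: cnj_unit_root unit_root_add)
qed

lemma adjoint_transl:
  assumes "N > 0" "q < N" "p < N"
  shows "\<exists>a. mat_adjoint (transl N q p) = a \<cdot>\<^sub>m transl N ((N - q) mod N) ((N - p) mod N)"
proof -
  let ?q = "(N - q) mod N" and ?p = "(N - p) mod N"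
  let ?a = "cnj (cis (pi * q * p / N)) * unit_root N (int q * int p) / cis (pi * ?q * ?p / N)"
  have "mat_adjoint (transl N q p) $$ (i,j) = (?a \<cdot>\<^sub>m transl N ?q ?p) $$ (i,j)"
    if "i < N" "j < N" for i j
  proof -
    have "i = (j + ?q) mod N \<longleftrightarrow> j = (i + q) mod N"
      using mod_add_eq_iff_mod_add_complement[OF assms(2) that] by (simp add: mod_add_right_eq)
    then show ?thesis
      using that assms cnj_unit_root_shift[OF assms(1,3), of j i q]
      by (simp add: index_mat_adjoint[of _ N N] index_transl)
  qed
  then show ?thesis
    by (intro exI[of _ ?a] eq_matI) simp_all
qed

section \<open>Matrices of linear maps on square matrices\<close>

lemma linear_on_mats_carrier: "linear_on_mats N L \<Longrightarrow> A \<in> carrier_mat N N \<Longrightarrow> L A \<in> carrier_mat N N"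
  unfolding linear_on_mats_def by blast

lemma linear_on_mats_add:
  "linear_on_mats N L \<Longrightarrow> A \<in> carrier_mat N N \<Longrightarrow> B \<in> carrier_mat N N \<Longrightarrow> L (A + B) = L A + L B"
  unfolding linear_on_mats_def by blast

lemma linear_on_mats_smult: "linear_on_mats N L \<Longrightarrow> A \<in> carrier_mat N N \<Longrightarrow> L (a \<cdot>\<^sub>m A) = a \<cdot>\<^sub>m L A"
  unfolding linear_on_mats_def by blast

lemma linear_on_mats_zero:
  assumes "linear_on_mats N L" shows "L (0\<^sub>m N N) = 0\<^sub>m N N"
proof -
  have "L (0\<^sub>m N N) = L (0 \<cdot>\<^sub>m 0\<^sub>m N N)"
    by simp
  also have "\<dots> = 0 \<cdot>\<^sub>m L (0\<^sub>m N N)"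
    using linear_on_mats_smult[OF assms zero_carrier_mat] .
  also have "\<dots> = 0\<^sub>m N N"
    using linear_on_mats_carrier[OF assms zero_carrier_mat] by auto
  finally show ?thesis .
qed

lemma linear_on_mats_comp:
  assumes "linear_on_mats N D" "linear_on_mats N E"
  shows "linear_on_mats N (\<lambda>X. D (E X))"
  using assms unfolding linear_on_mats_def by simp

fun mat_sum :: "nat \<Rightarrow> nat \<Rightarrow> (nat \<Rightarrow> complex mat) \<Rightarrow> complex mat" where
  "mat_sum N 0 f = 0\<^sub>m N N"
| "mat_sum N (Suc m) f = mat_sum N m f + f m"

lemma mat_sum_carrier: "(\<And>l. l < m \<Longrightarrow> f l \<in> carrier_mat N N) \<Longrightarrow> mat_sum N m f \<in> carrier_mat N N"
  by (induction m) auto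

lemma index_mat_sum:
  assumes "\<And>l. l < m \<Longrightarrow> f l \<in> carrier_mat N N" "i < N" "j < N"
  shows "mat_sum N m f $$ (i,j) = (\<Sum>l<m. f l $$ (i,j))"
  using assms(1)
proof (induction m)
  case (Suc m)
  have "mat_sum N m f \<in> carrier_mat N N" "f m \<in> carrier_mat N N"
    using Suc.prems by (auto intro: mat_sum_carrier)
  then have "dim_row (f m) = N" "dim_col (f m) = N" "dim_row (mat_sum N m f) = N" "dim_col (mat_sum N m f) = N"
    by auto
  then show ?case
    using Suc assms(2,3) by simp
qed (use assms in simp)

lemma linear_on_mats_mat_sum:
  assumes L: "linear_on_mats N L" and A: "\<And>l. l < m \<Longrightarrow> A l \<in> carrier_mat N N"
  shows "L (mat_sum N m (\<lambda>l. a l \<cdot>\<^sub>m A l)) = mat_sum N m (\<lambda>l. a l \<cdot>\<^sub>m L (A l))"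
  using A
proof (induction m)
  case 0
  then show ?case
    using linear_on_mats_zero[OF L] by simp
next
  case (Suc m)
  have "mat_sum N m (\<lambda>l. a l \<cdot>\<^sub>m A l) \<in> carrier_mat N N"
    using Suc.prems by (intro mat_sum_carrier) auto
  then show ?case
    using Suc by (simp add: linear_on_mats_add[OF L] linear_on_mats_smult[OF L])
qed

lemma mat_unit_carrier [simp]: "mat_unit N i j \<in> carrier_mat N N"
  by (simp add: mat_unit_def)

lemma mat_sum_mat_unit:
  assumes "X \<in> carrier_mat N N"
  shows "mat_sum N (N * N) (\<lambda>l. X $$ (l div N, l mod N) \<cdot>\<^sub>m mat_unit N (l div N) (l mod N)) = X"
    (is "?S = X")
proof -
  have S: "?S \<in> carrier_mat N N"
    by (rule mat_sum_carrier) simp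
  show ?thesis
  proof (rule eq_matI)
    fix i j assume "i < dim_row X" "j < dim_col X"
    then have ij: "i < N" "j < N"
      using assms by auto
    have "(i = l div N \<and> j = l mod N) \<longleftrightarrow> l = i * N + j" for l
      using ij by auto
    then show "?S $$ (i,j) = X $$ (i,j)"
      using ij pair_index_less_square[OF ij]
      by (simp add: index_mat_sum mat_unit_def if_distrib if_distribR cong: if_cong)
  qed (use assms S in auto)
qed

definition vec_of_mat :: "nat \<Rightarrow> complex mat \<Rightarrow> complex vec" where
  "vec_of_mat N X = vec (N * N) (\<lambda>k. X $$ (k div N, k mod N))"

lemma vec_of_mat_carrier [simp]: "vec_of_mat N X \<in> carrier_vec (N * N)"
  by (simp add: vec_of_mat_def)

lemma dim_vec_of_mat [simp]: "dim_vec (vec_of_mat N X) = N * N"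
  by (simp add: vec_of_mat_def)

lemma index_vec_of_mat [simp]: "k < N * N \<Longrightarrow> vec_of_mat N X $ k = X $$ (k div N, k mod N)"
  by (simp add: vec_of_mat_def)

lemma vec_of_mat_inj:
  assumes "X \<in> carrier_mat N N" "Y \<in> carrier_mat N N" "vec_of_mat N X = vec_of_mat N Y"
  shows "X = Y"
proof (rule eq_matI)
  fix i j assume "i < dim_row Y" "j < dim_col Y"
  then have ij: "i < N" "j < N"
    using assms by auto
  then show "X $$ (i,j) = Y $$ (i,j)"
    using arg_cong[OF assms(3), of "\<lambda>v. v $ (i * N + j)"] pair_index_less_square[OF ij] by simp
qed (use assms in auto)

lemma vec_of_mat_smult: "X \<in> carrier_mat N N \<Longrightarrow> vec_of_mat N (a \<cdot>\<^sub>m X) = a \<cdot>\<^sub>v vec_of_mat N X"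
  by (intro eq_vecI) (auto simp: div_mod_less_square)

lemma vec_of_mat_zero: "vec_of_mat N (0\<^sub>m N N) = 0\<^sub>v (N * N)"
  by (intro eq_vecI) (auto simp: div_mod_less_square)

lemma rep_map_carrier [simp]: "rep_map N L \<in> carrier_mat (N * N) (N * N)"
  by (simp add: rep_map_def)

lemma dim_rep_map [simp]: "dim_row (rep_map N L) = N * N" "dim_col (rep_map N L) = N * N"
  by (simp_all add: rep_map_def)

lemma index_rep_map:
  "k < N * N \<Longrightarrow> l < N * N \<Longrightarrow> rep_map N L $$ (k,l) = L (mat_unit N (l div N) (l mod N)) $$ (k div N, k mod N)"
  by (simp add: rep_map_def)

lemma rep_map_mult_vec_of_mat:
  assumes L: "linear_on_mats N L" and X: "X \<in> carrier_mat N N"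
  shows "rep_map N L *\<^sub>v vec_of_mat N X = vec_of_mat N (L X)"
proof (rule eq_vecI)
  let ?E = "\<lambda>l. mat_unit N (l div N) (l mod N)" and ?x = "\<lambda>l. X $$ (l div N, l mod N)"
  fix k assume "k < dim_vec (vec_of_mat N (L X))"
  then have k: "k < N * N"
    by simp
  have LE: "L (?E l) \<in> carrier_mat N N" for l
    using linear_on_mats_carrier[OF L] by simp
  then have dim_LE: "dim_row (L (?E l)) = N" "dim_col (L (?E l)) = N" for l
    by auto
  have "(rep_map N L *\<^sub>v vec_of_mat N X) $ k = (\<Sum>l<N * N. ?x l * L (?E l) $$ (k div N, k mod N))"
    using k by (simp add: index_mult_mat_vec_sum[of _ "N * N" "N * N"] index_rep_map mult.commute)
  also have "\<dots> = mat_sum N (N * N) (\<lambda>l. ?x l \<cdot>\<^sub>m L (?E l)) $$ (k div N, k mod N)"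
    using k LE by (simp add: index_mat_sum div_mod_less_square dim_LE)
  also have "\<dots> = L X $$ (k div N, k mod N)"
    using linear_on_mats_mat_sum[OF L, of "N * N" ?E ?x] mat_sum_mat_unit[OF X] by simp
  finally show "(rep_map N L *\<^sub>v vec_of_mat N X) $ k = vec_of_mat N (L X) $ k"
    using k by simp
qed simp

lemma rep_map_comp:
  assumes D: "linear_on_mats N D" and E: "linear_on_mats N E"
  shows "rep_map N (\<lambda>X. D (E X)) = rep_map N D * rep_map N E"
proof (rule eq_matI)
  fix k l assume "k < dim_row (rep_map N D * rep_map N E)" "l < dim_col (rep_map N D * rep_map N E)"
  then have k: "k < N * N" and l: "l < N * N"
    by auto
  let ?EE = "E (mat_unit N (l div N) (l mod N))"
  have EE: "?EE \<in> carrier_mat N N"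
    using linear_on_mats_carrier[OF E mat_unit_carrier] .
  have "rep_map N (\<lambda>X. D (E X)) $$ (k,l) = vec_of_mat N (D ?EE) $ k"
    using k l by (simp add: index_rep_map)
  also have "\<dots> = (rep_map N D *\<^sub>v vec_of_mat N ?EE) $ k"
    using rep_map_mult_vec_of_mat[OF D EE] by simp
  also have "\<dots> = (rep_map N D * rep_map N E) $$ (k,l)"
    using k l by (simp add: index_mult_mat_vec_sum[of _ "N * N" "N * N"]
        index_mult_mat_sum[OF rep_map_carrier rep_map_carrier k l] index_rep_map)
  finally show "rep_map N (\<lambda>X. D (E X)) $$ (k,l) = (rep_map N D * rep_map N E) $$ (k,l)" .
qed simp_all

lemma eigenvalue_rep_map:
  assumes L: "linear_on_mats N L" and "is_eigenvalue N L lam"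
  shows "eigenvalue (rep_map N L) lam"
proof -
  obtain X where X: "X \<in> carrier_mat N N" "X \<noteq> 0\<^sub>m N N" "L X = lam \<cdot>\<^sub>m X"
    using assms(2) by (auto simp: is_eigenvalue_def)
  have "vec_of_mat N X \<noteq> 0\<^sub>v (N * N)"
    using vec_of_mat_inj[OF X(1) zero_carrier_mat] X(2) vec_of_mat_zero by metis
  moreover have "rep_map N L *\<^sub>v vec_of_mat N X = lam \<cdot>\<^sub>v vec_of_mat N X"
    using rep_map_mult_vec_of_mat[OF L X(1)] X(3) vec_of_mat_smult[OF X(1)] by simp
  ultimately show ?thesis
    unfolding eigenvalue_def eigenvector_def by (intro exI[of _ "vec_of_mat N X"]) simp
qed

lemma linear_on_mats_adjoint_conj:
  assumes D: "linear_on_mats N D"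
  shows "linear_on_mats N (\<lambda>X. mat_adjoint (D (mat_adjoint X)))"
  unfolding linear_on_mats_def
proof (intro conjI ballI allI)
  fix A B :: "complex mat" assume A: "A \<in> carrier_mat N N" and B: "B \<in> carrier_mat N N"
  have DA: "D (mat_adjoint A) \<in> carrier_mat N N" and DB: "D (mat_adjoint B) \<in> carrier_mat N N"
    using A B by (simp_all add: linear_on_mats_carrier[OF D])
  show "mat_adjoint (D (mat_adjoint A)) \<in> carrier_mat N N"
    using DA by simp
  show "mat_adjoint (D (mat_adjoint (A + B))) = mat_adjoint (D (mat_adjoint A)) + mat_adjoint (D (mat_adjoint B))"
    using A B DA DB by (simp add: adjoint_add_mat[of _ N N] linear_on_mats_add[OF D])
next
  fix a and A :: "complex mat" assume A: "A \<in> carrier_mat N N"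
  then have "D (mat_adjoint A) \<in> carrier_mat N N"
    by (simp add: linear_on_mats_carrier[OF D])
  then show "mat_adjoint (D (mat_adjoint (a \<cdot>\<^sub>m A))) = a \<cdot>\<^sub>m mat_adjoint (D (mat_adjoint A))"
    using A by (simp add: adjoint_smult_mat[of _ N N] linear_on_mats_smult[OF D])
qed

definition transl_basis :: "nat \<Rightarrow> complex mat" where
  "transl_basis N = mat (N * N) (N * N)
    (\<lambda>(k,l). transl N (l div N) (l mod N) $$ (k div N, k mod N) / sqrt (real N))"

lemma transl_basis_carrier [simp]: "transl_basis N \<in> carrier_mat (N * N) (N * N)"
  by (simp add: transl_basis_def)

lemma dim_transl_basis [simp]: "dim_row (transl_basis N) = N * N" "dim_col (transl_basis N) = N * N"
  by (simp_all add: transl_basis_def)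

lemma unitary_transl_basis:
  assumes "N > 0" shows "unitary_mat (N * N) (transl_basis N)"
proof (rule unitary_matI_orthonormal)
  fix a b assume a: "a < N * N" and b: "b < N * N"
  let ?f = "\<lambda>i j. cnj (transl N (a div N) (a mod N) $$ (i,j)) * transl N (b div N) (b mod N) $$ (i,j)"
  have "cnj (sqrt (real N)) * sqrt (real N) = of_nat N"
    using assms by (simp flip: of_real_mult)
  then have "(\<Sum>k<N * N. cnj (transl_basis N $$ (k,a)) * transl_basis N $$ (k,b))
      = (\<Sum>k<N * N. ?f (k div N) (k mod N)) / of_nat N"
    using a b by (simp add: transl_basis_def sum_divide_distrib)
  also have "\<dots> = (\<Sum>i<N. \<Sum>j<N. ?f i j) / of_nat N"
    using sum_div_mod_square[where f = ?f] by simp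
  also have "\<dots> = (if a = b then 1 else 0)"
    using transl_orthogonal[OF assms div_mod_less_square[OF a] div_mod_less_square[OF b]] assms
    by (auto simp: eq_iff_div_mod_eq[of a b N])
  finally show "(\<Sum>k<N * N. cnj (transl_basis N $$ (k,a)) * transl_basis N $$ (k,b)) = (if a = b then 1 else 0)" .
qed simp

lemma index_rep_map_mult_transl_basis:
  assumes L: "linear_on_mats N L" and k: "k < N * N" and l: "l < N * N"
  shows "(rep_map N L * transl_basis N) $$ (k,l)
    = L (transl N (l div N) (l mod N)) $$ (k div N, k mod N) / sqrt (real N)"
proof -
  let ?T = "transl N (l div N) (l mod N)"
  have "(rep_map N L * transl_basis N) $$ (k,l) = (rep_map N L *\<^sub>v vec_of_mat N ?T) $ k / sqrt (real N)"
    using k l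
    by (simp only: index_mult_mat_sum[OF rep_map_carrier transl_basis_carrier k l])
      (simp add: index_mult_mat_vec_sum[of _ "N * N" "N * N"] sum_divide_distrib transl_basis_def)
  then show ?thesis
    using k by (simp add: rep_map_mult_vec_of_mat[OF L transl_carrier])
qed

lemma linear_on_mats_eqI_transl:
  assumes N: "N > 0" and L1: "linear_on_mats N L1" and L2: "linear_on_mats N L2"
    and agree: "\<And>q p. q < N \<Longrightarrow> p < N \<Longrightarrow> L1 (transl N q p) = L2 (transl N q p)"
    and X: "X \<in> carrier_mat N N"
  shows "L1 X = L2 X"
proof -
  let ?F = "transl_basis N"
  have F: "?F * mat_adjoint ?F = 1\<^sub>m (N * N)"
    using unitary_transl_basis[OF N] by (simp add: unitary_mat_def)
  have "rep_map N L1 * ?F = rep_map N L2 * ?F"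
    using agree div_mod_less_square
    by (intro eq_matI) (simp_all add: index_rep_map_mult_transl_basis[OF L1] index_rep_map_mult_transl_basis[OF L2])
  then have "rep_map N L1 * ?F * mat_adjoint ?F = rep_map N L2 * ?F * mat_adjoint ?F"
    by simp
  then have "rep_map N L1 = rep_map N L2"
    using F by (simp add: assoc_mult_mat[of _ "N * N" "N * N" _ "N * N" _ "N * N"])
  then have "vec_of_mat N (L1 X) = vec_of_mat N (L2 X)"
    using rep_map_mult_vec_of_mat[OF L1 X] rep_map_mult_vec_of_mat[OF L2 X] by simp
  then show ?thesis
    using vec_of_mat_inj linear_on_mats_carrier[OF L1 X] linear_on_mats_carrier[OF L2 X] by blast
qed

lemma rep_map_transl_diagonal:
  assumes N: "N > 0" and D: "linear_on_mats N D"
    and eigen: "\<And>q p. q < N \<Longrightarrow> p < N \<Longrightarrow> D (transl N q p) = complex_of_real (d q p) \<cdot>\<^sub>m transl N q p"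
  shows "rep_map N D
    = transl_basis N * diag_real_mat (N * N) (\<lambda>k. d (k div N) (k mod N)) * mat_adjoint (transl_basis N)"
proof -
  let ?F = "transl_basis N" and ?C = "diag_real_mat (N * N) (\<lambda>k. d (k div N) (k mod N))"
  have "rep_map N D * ?F = ?F * ?C"
  proof (rule eq_matI)
    fix k l assume "k < dim_row (?F * ?C)" "l < dim_col (?F * ?C)"
    then have k: "k < N * N" and l: "l < N * N"
      by auto
    have "(?F * ?C) $$ (k,l) = ?F $$ (k,l) * d (l div N) (l mod N)"
      using k l by (simp add: index_mult_mat_sum[of _ "N * N" "N * N" _ "N * N"] if_distrib if_distribR
          cong: if_cong)
    then show "(rep_map N D * ?F) $$ (k,l) = (?F * ?C) $$ (k,l)"
      unfolding index_rep_map_mult_transl_basis[OF D k l]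
      using k l eigen div_mod_less_square by (simp add: transl_basis_def)
  qed simp_all
  then have "rep_map N D * (?F * mat_adjoint ?F) = ?F * ?C * mat_adjoint ?F"
    by (simp flip: assoc_mult_mat[of _ "N * N" "N * N" _ "N * N" _ "N * N"])
  then show ?thesis
    using unitary_transl_basis[OF N] by (simp add: unitary_mat_def)
qed

lemma linear_on_mats_unitary_conj:
  assumes U: "U \<in> carrier_mat N N"
  shows "linear_on_mats N (unitary_conj U)"
  unfolding linear_on_mats_def unitary_conj_def
proof (intro conjI ballI allI)
  fix A B :: "complex mat" assume A: "A \<in> carrier_mat N N" and B: "B \<in> carrier_mat N N"
  show "U * A * mat_adjoint U \<in> carrier_mat N N"
    using U A by (simp add: mult_carrier_mat[of _ N N _ N])
  show "U * (A + B) * mat_adjoint U = U * A * mat_adjoint U + U * B * mat_adjoint U"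
    using U A B by (simp add: mult_add_distrib_mat[of U N N] add_mult_distrib_mat[of _ N N _ _ N]
        mult_carrier_mat[of U N N _ N])
next
  fix a and A :: "complex mat" assume A: "A \<in> carrier_mat N N"
  show "U * (a \<cdot>\<^sub>m A) * mat_adjoint U = a \<cdot>\<^sub>m (U * A * mat_adjoint U)"
    using U A by (simp add: mult_smult_distrib[of _ N N] mult_smult_assoc_mat[of _ N N _ N]
        mult_carrier_mat[of _ N N _ N])
qed

lemma index_unitary_conj_mat_unit:
  assumes U: "U \<in> carrier_mat N N" and ij: "i < N" "j < N" and "a < N" "b < N"
  shows "unitary_conj U (mat_unit N a b) $$ (i,j) = U $$ (i,a) * cnj (U $$ (j,b))"
proof -
  have UE: "(U * mat_unit N a b) $$ (i,m) = (if m = b then U $$ (i,a) else 0)" if "m < N" for m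
    using assms that by (simp add: index_mult_mat_sum[of _ N N _ N] mat_unit_def if_distrib if_distribR
        cong: if_cong)
  have "unitary_conj U (mat_unit N a b) $$ (i,j) = (\<Sum>m<N. (U * mat_unit N a b) $$ (i,m) * cnj (U $$ (j,m)))"
    unfolding unitary_conj_def
    using index_mult_mat_sum[OF mult_carrier_mat[OF U mat_unit_carrier] carrier_mat_adjoint[OF U] ij] ij
    by (simp add: index_mat_adjoint[OF U])
  also have "\<dots> = U $$ (i,a) * cnj (U $$ (j,b))"
    using assms by (simp add: UE if_distrib if_distribR cong: if_cong)
  finally show ?thesis .
qed

lemma index_rep_map_unitary_conj:
  assumes "U \<in> carrier_mat N N" "k < N * N" "l < N * N"
  shows "rep_map N (unitary_conj U) $$ (k,l) = U $$ (k div N, l div N) * cnj (U $$ (k mod N, l mod N))"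
  using assms by (simp add: index_rep_map index_unitary_conj_mat_unit div_mod_less_square)

lemma unitary_rep_map_unitary_conj:
  assumes U: "unitary_mat N U"
  shows "unitary_mat (N * N) (rep_map N (unitary_conj U))"
proof (rule unitary_matI_orthonormal)
  have U_carrier: "U \<in> carrier_mat N N"
    using U by (rule unitary_mat_carrier)
  fix l l' assume l: "l < N * N" and l': "l' < N * N"
  let ?f = "\<lambda>i j. (cnj (U $$ (i, l div N)) * U $$ (i, l' div N)) * cnj (cnj (U $$ (j, l mod N)) * U $$ (j, l' mod N))"
  have "(\<Sum>k<N * N. cnj (rep_map N (unitary_conj U) $$ (k,l)) * rep_map N (unitary_conj U) $$ (k,l'))
      = (\<Sum>k<N * N. ?f (k div N) (k mod N))"
    using l l' by (intro sum.cong) (simp_all add: index_rep_map_unitary_conj[OF U_carrier] algebra_simps)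
  also have "\<dots> = (\<Sum>i<N. cnj (U $$ (i, l div N)) * U $$ (i, l' div N))
      * cnj (\<Sum>j<N. cnj (U $$ (j, l mod N)) * U $$ (j, l' mod N))"
    using sum_div_mod_square[where f = ?f] by (simp add: sum_product cnj_sum)
  also have "\<dots> = (if l = l' then 1 else 0)"
    using l l' by (auto simp: unitary_mat_col_orthonormal[OF U] div_mod_less_square eq_iff_div_mod_eq[of l l' N])
  finally show "(\<Sum>k<N * N. cnj (rep_map N (unitary_conj U) $$ (k,l)) * rep_map N (unitary_conj U) $$ (k,l'))
      = (if l = l' then 1 else 0)" .
qed simp

lemma order_prod_mset_linear:
  "order a (\<Prod>s\<in>#S. [:- h s, 1::complex:]) = count (image_mset h S) a"
proof (induction S)
  case empty
  then show ?case
    by (simp add: order_0I)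
next
  case (add x S)
  have "(\<Prod>s\<in>#S. [:- h s, 1::complex:]) \<noteq> 0"
    by auto
  then have "[:- h x, 1:] * (\<Prod>s\<in>#S. [:- h s, 1::complex:]) \<noteq> 0"
    by (metis mult_eq_0_iff pCons_eq_0_iff one_neq_zero)
  then have "order a ([:- h x, 1:] * (\<Prod>s\<in>#S. [:- h s, 1:])) = order a [:- h x, 1:] + order a (\<Prod>s\<in>#S. [:- h s, 1:])"
    by (rule order_mult)
  then show ?case
    using add by (simp add: order_linear')
qed

lemma prod_mset_sq_linear_inj:
  fixes S T :: "real multiset"
  assumes "\<forall>s\<in>#S. 0 \<le> s" "\<forall>s\<in>#T. 0 \<le> s"
    and "(\<Prod>s\<in>#S. [:- complex_of_real (s\<^sup>2), 1:]) = (\<Prod>s\<in>#T. [:- complex_of_real (s\<^sup>2), 1:])"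
  shows "S = T"
proof -
  let ?h = "\<lambda>s. complex_of_real (s\<^sup>2)" and ?g = "\<lambda>z. sqrt (Re z)"
  have "image_mset ?h S = image_mset ?h T"
    using order_prod_mset_linear[of _ ?h S] order_prod_mset_linear[of _ ?h T] assms(3)
    by (intro multiset_eqI) metis
  then have "image_mset ?g (image_mset ?h S) = image_mset ?g (image_mset ?h T)"
    by simp
  moreover have "image_mset ?g (image_mset ?h M) = M" if "\<forall>s\<in>#M. 0 \<le> s" for M
    using that by (simp add: multiset.map_comp comp_def image_mset_cong[where g = id])
  ultimately show ?thesis
    using assms(1,2) by simp
qed

lemma singular_values_eqI:
  assumes "\<forall>s\<in>#S. 0 \<le> s"
    and "char_poly (mat_adjoint (rep_map N L) * rep_map N L) = (\<Prod>s\<in>#S. [:- complex_of_real (s\<^sup>2), 1:])"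
  shows "singular_values N L = S"
  unfolding singular_values_def
proof (rule the_equality)
  fix T assume "(\<forall>s\<in>#T. 0 \<le> s) \<and>
    char_poly (mat_adjoint (rep_map N L) * rep_map N L) = (\<Prod>s\<in>#T. [:- complex_of_real (s\<^sup>2), 1:])"
  then have T: "\<forall>s\<in>#T. 0 \<le> s"
    and "char_poly (mat_adjoint (rep_map N L) * rep_map N L) = (\<Prod>s\<in>#T. [:- complex_of_real (s\<^sup>2), 1:])"
    by blast+
  then show "T = S"
    using T assms by (intro prod_mset_sq_linear_inj) simp_all
qed (intro conjI assms)

section \<open>The Fourier coefficients of the noise\<close>

lemma ctilde_0_0 [simp]: "ctilde N \<epsilon> 0 0 = 1"
  by (simp add: ctilde_def)

lemma ctilde_nonneg: "0 \<le> ctilde N \<epsilon> \<mu> \<nu>"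
  by (simp add: ctilde_def)

lemma sin_sq_pi_mod_complement:
  assumes "q < N"
  shows "(sin (pi * real ((N - q) mod N) / real N))\<^sup>2 = (sin (pi * real q / real N))\<^sup>2"
proof (cases "q = 0")
  case False
  then have "pi * real ((N - q) mod N) / real N = pi - pi * real q / real N"
    using assms by (simp add: of_nat_diff field_simps)
  then show ?thesis
    by simp
qed simp

lemma ctilde_mod_complement:
  "q < N \<Longrightarrow> p < N \<Longrightarrow> ctilde N \<epsilon> ((N - q) mod N) ((N - p) mod N) = ctilde N \<epsilon> q p"
  by (simp add: ctilde_def sin_sq_pi_mod_complement)

lemma ctilde_lower_bound: "exp (- (\<epsilon> * real N / pi)\<^sup>2) \<le> ctilde N \<epsilon> \<mu> \<nu>"
proof -
  let ?s = "(sin (pi * real \<mu> / real N))\<^sup>2 + (sin (pi * real \<nu> / real N))\<^sup>2"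
  have "?s \<le> 2"
    using sin_squared_eq[of "pi * real \<mu> / real N"]
      sin_squared_eq[of "pi * real \<nu> / real N"] zero_le_power2[of "cos (pi * real \<mu> / real N)"]
      zero_le_power2[of "cos (pi * real \<nu> / real N)"]
    by linarith
  then have "(1/2) * (\<epsilon> * real N / pi)\<^sup>2 * ?s \<le> (\<epsilon> * real N / pi)\<^sup>2"
    using mult_left_mono[of ?s 2 "(1/2) * (\<epsilon> * real N / pi)\<^sup>2"] by simp
  then show ?thesis
    unfolding ctilde_def exp_le_cancel_iff by simp
qed

lemma sin_pi_div_le:
  assumes N: "2 \<le> N" and \<mu>: "0 < \<mu>" "\<mu> < N"
  shows "sin (pi / real N) \<le> sin (pi * real \<mu> / real N)"
proof -
  have sin_mono: "sin (pi / real N) \<le> sin (pi * real m / real N)" if "0 < m" "2 * m \<le> N" for m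
  proof (rule sin_monotone_2pi_le)
    show "- (pi / 2) \<le> pi / real N"
      using N by (smt (verit) divide_nonneg_nonneg of_nat_0_le_iff pi_ge_zero)
    show "pi / real N \<le> pi * real m / real N"
      using that N by (simp add: divide_right_mono)
    show "pi * real m / real N \<le> pi / 2"
      using that N by (simp add: field_simps)
  qed
  show ?thesis
  proof (cases "2 * \<mu> \<le> N")
    case False
    have "pi * real (N - \<mu>) / real N = pi - pi * real \<mu> / real N"
      using \<mu> by (simp add: of_nat_diff field_simps)
    then show ?thesis
      using sin_mono[of "N - \<mu>"] False \<mu> by simp
  next
    case True
    then show ?thesis
      using sin_mono[of \<mu>] \<mu> by simp
  qed
qed

lemma ctilde_upper_bound:
  assumes N: "2 \<le> N" and "\<mu> < N" "\<nu> < N" "\<mu> \<noteq> 0 \<or> \<nu> \<noteq> 0"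
  shows "ctilde N \<epsilon> \<mu> \<nu> \<le> exp (- (1/2) * (\<epsilon> * real N / pi)\<^sup>2 * (sin (pi / real N))\<^sup>2)"
proof -
  have sin_pos: "0 \<le> sin (pi / real N)"
    using N by (intro sin_ge_zero) (auto simp: field_simps)
  have sq_le: "(sin (pi / real N))\<^sup>2 \<le> (sin (pi * real m / real N))\<^sup>2" if "0 < m" "m < N" for m
    using sin_pi_div_le[OF N that] sin_pos by (intro power_mono) auto
  have "(sin (pi / real N))\<^sup>2 \<le> (sin (pi * real \<mu> / real N))\<^sup>2 + (sin (pi * real \<nu> / real N))\<^sup>2"
    using assms sq_le[of \<mu>] sq_le[of \<nu>] zero_le_power2[of "sin (pi * real \<mu> / real N)"]
      zero_le_power2[of "sin (pi * real \<nu> / real N)"]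
    by (cases "\<mu> = 0") (auto simp: add_increasing add_increasing2)
  then have "(1/2) * (\<epsilon> * real N / pi)\<^sup>2 * (sin (pi / real N))\<^sup>2 \<le>
      (1/2) * (\<epsilon> * real N / pi)\<^sup>2 * ((sin (pi * real \<mu> / real N))\<^sup>2 + (sin (pi * real \<nu> / real N))\<^sup>2)"
    by (intro mult_left_mono) auto
  then show ?thesis
    unfolding ctilde_def exp_le_cancel_iff by simp
qed

lemma ctilde_gap_less_1:
  assumes "2 \<le> N" "0 < \<epsilon>"
  shows "exp (- (1/2) * (\<epsilon> * real N / pi)\<^sup>2 * (sin (pi / real N))\<^sup>2) < 1"
proof -
  have "0 < sin (pi / real N)"
    using assms(1) by (intro sin_gt_zero) (auto simp: field_simps)
  then have "0 < (1/2) * (\<epsilon> * real N / pi)\<^sup>2 * (sin (pi / real N))\<^sup>2"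
    using assms by (intro mult_pos_pos) auto
  then show ?thesis
    by simp
qed

section \<open>The noisy unitary map\<close>

locale noisy_unitary_map =
  fixes N :: nat and \<epsilon> :: real and U0 :: "complex mat" and D L :: "complex mat \<Rightarrow> complex mat"
  assumes N2: "N \<ge> 2"
    and eps: "\<epsilon> > 0"
    and U0: "unitary_mat N U0"
    and Dlin: "linear_on_mats N D"
    and Dbasis: "\<forall>\<mu> < N. \<forall>\<nu> < N.
        D (transl N \<mu> \<nu>) = complex_of_real (ctilde N \<epsilon> \<mu> \<nu>) \<cdot>\<^sub>m transl N \<mu> \<nu>"
    and Ldef: "\<forall>\<rho>. L \<rho> = D (U0 * \<rho> * mat_adjoint U0)"
begin

abbreviation F :: "complex mat" where
  "F \<equiv> transl_basis N"

abbreviation c :: "nat \<Rightarrow> real" where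
  "c k \<equiv> ctilde N \<epsilon> (k div N) (k mod N)"

(* Conjugation by U0 written in the basis of normalised translation operators, the basis in which
   D is diagonal. *)
definition W :: "complex mat" where
  "W = mat_adjoint F * rep_map N (unitary_conj U0) * F"

lemma N_pos: "N > 0"
  using N2 by simp

lemma U0_carrier [simp]: "U0 \<in> carrier_mat N N"
  using U0 by (rule unitary_mat_carrier)

lemma unitary_F: "unitary_mat (N * N) F"
  using N_pos by (rule unitary_transl_basis)

lemma L_eq: "L = (\<lambda>\<rho>. D (unitary_conj U0 \<rho>))"
  using Ldef by (simp add: unitary_conj_def fun_eq_iff)

lemma linear_L: "linear_on_mats N L"
  unfolding L_eq using Dlin linear_on_mats_unitary_conj[OF U0_carrier] by (rule linear_on_mats_comp)

lemma W_unit_vec_0: "W *\<^sub>v unit_vec (N * N) 0 = unit_vec (N * N) 0"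
proof -
  let ?e = "unit_vec (N * N) 0 :: complex vec" and ?R = "rep_map N (unitary_conj U0)"
  have e: "?e \<in> carrier_vec (N * N)"
    by simp
  have "F *\<^sub>v ?e = (1 / sqrt (real N)) \<cdot>\<^sub>v vec_of_mat N (1\<^sub>m N)"
    using N_pos by (intro eq_vecI) (simp_all add: index_mult_mat_vec transl_basis_def transl_0_0 div_mod_less_square)
  moreover have "?R *\<^sub>v vec_of_mat N (1\<^sub>m N) = vec_of_mat N (1\<^sub>m N)"
    using rep_map_mult_vec_of_mat[OF linear_on_mats_unitary_conj[OF U0_carrier] one_carrier_mat]
    by (simp add: unitary_conj_one[OF U0])
  ultimately have RFe: "?R *\<^sub>v (F *\<^sub>v ?e) = F *\<^sub>v ?e"
    by (simp add: mult_mat_vec[of _ "N * N" "N * N"])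
  have "W *\<^sub>v ?e = (mat_adjoint F * ?R) *\<^sub>v (F *\<^sub>v ?e)"
    unfolding W_def using e
    by (simp add: assoc_mult_mat_vec[of _ "N * N" "N * N" _ "N * N"] mult_carrier_mat[of _ "N * N" "N * N" _ "N * N"])
  also have "\<dots> = mat_adjoint F *\<^sub>v (?R *\<^sub>v (F *\<^sub>v ?e))"
    by (rule assoc_mult_mat_vec[of _ "N * N" "N * N" _ "N * N"]) (simp_all add: mult_mat_vec_carrier[of _ "N * N" "N * N"])
  also have "\<dots> = (mat_adjoint F * F) *\<^sub>v ?e"
    unfolding RFe using e by (simp add: assoc_mult_mat_vec[of _ "N * N" "N * N" _ "N * N"])
  finally show ?thesis
    using e by (simp add: unitary_mat_adjoint_mult[OF unitary_F])
qed

sublocale diag_unitary "N * N" c W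
proof
  show "unitary_mat (N * N) W"
    unfolding W_def
    by (intro unitary_mat_mult unitary_mat_adjoint unitary_F unitary_rep_map_unitary_conj U0)
qed (use N_pos W_unit_vec_0 ctilde_nonneg in simp_all)


lemma rep_map_L: "rep_map N L = unitary_conj F G"
proof -
  let ?C = "diag_real_mat (N * N) c" and ?R = "rep_map N (unitary_conj U0)"
  have "rep_map N L = rep_map N D * ?R"
    unfolding L_eq by (rule rep_map_comp[OF Dlin linear_on_mats_unitary_conj[OF U0_carrier]])
  also have "rep_map N D = unitary_conj F ?C"
    unfolding unitary_conj_def using Dbasis by (intro rep_map_transl_diagonal[OF N_pos Dlin]) simp
  also have "?R = unitary_conj F W"
    unfolding W_def by (rule unitary_conj_adjoint_conj[OF unitary_F, symmetric]) simp
  also have "unitary_conj F ?C * unitary_conj F W = unitary_conj F G"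
    by (rule unitary_conj_mult[OF unitary_F]) simp_all
  finally show ?thesis .
qed

lemma similar_rep_map_L: "similar_mat (rep_map N L) G"
  unfolding rep_map_L by (rule similar_mat_unitary_conj[OF unitary_F]) simp

lemma L_fixes_maximally_mixed: "L ((1 / of_nat N) \<cdot>\<^sub>m 1\<^sub>m N) = (1 / of_nat N) \<cdot>\<^sub>m 1\<^sub>m N"
proof -
  have "D (1\<^sub>m N) = 1 \<cdot>\<^sub>m 1\<^sub>m N"
    using Dbasis N_pos by (simp add: transl_0_0[OF N_pos, symmetric])
  also have "(1 \<cdot>\<^sub>m 1\<^sub>m N :: complex mat) = 1\<^sub>m N"
    by (rule eq_matI) simp_all
  finally have "D (1\<^sub>m N) = 1\<^sub>m N" .
  moreover have "unitary_conj U0 (1\<^sub>m N) = 1\<^sub>m N"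
    using U0 by (rule unitary_conj_one)
  ultimately show ?thesis
    using linear_on_mats_smult[OF linear_L one_carrier_mat] by (simp add: L_eq)
qed

lemma c_le_gap:
  assumes "0 < k" "k < N * N"
  shows "c k \<le> exp (- (1/2) * (\<epsilon> * real N / pi)\<^sup>2 * (sin (pi / real N))\<^sup>2)"
proof -
  have "k div N \<noteq> 0 \<or> k mod N \<noteq> 0"
    using div_mod_eq_0_iff[of k N] assms(1) by auto
  then show ?thesis
    using assms(2) by (intro ctilde_upper_bound[OF N2]) (simp_all add: div_mod_less_square)
qed

lemma alg_mult_L_1: "alg_mult N L 1 = 1"
proof -
  have "alg_mult N L 1 = order 1 (char_poly G)"
    unfolding alg_mult_def using char_poly_similar[OF similar_rep_map_L] by simp
  also have "\<dots> = 1"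
    by (rule order_1_char_poly_G[OF ctilde_gap_less_1[OF N2 eps] _ c_le_gap]) simp_all
  finally show ?thesis .
qed

lemma D_adjoint:
  assumes X: "X \<in> carrier_mat N N"
  shows "D (mat_adjoint X) = mat_adjoint (D X)"
proof -
  have "mat_adjoint (D (mat_adjoint (transl N q p))) = D (transl N q p)" if qp: "q < N" "p < N" for q p
  proof -
    obtain a where a: "mat_adjoint (transl N q p) = a \<cdot>\<^sub>m transl N ((N - q) mod N) ((N - p) mod N)"
      using adjoint_transl[OF N_pos qp] by blast
    have "D (mat_adjoint (transl N q p)) = complex_of_real (ctilde N \<epsilon> q p) \<cdot>\<^sub>m mat_adjoint (transl N q p)"
      using qp Dbasis N_pos
      by (simp add: a linear_on_mats_smult[OF Dlin] ctilde_mod_complement smult_smult_mat mult.commute)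
    then show ?thesis
      using qp Dbasis by (simp add: adjoint_smult_mat[of _ N N] adjoint_adjoint_mat[OF transl_carrier])
  qed
  then have "mat_adjoint (D (mat_adjoint X)) = D X"
    using linear_on_mats_eqI_transl[OF N_pos linear_on_mats_adjoint_conj[OF Dlin] Dlin _ X] by blast
  then show ?thesis
    using linear_on_mats_carrier[OF Dlin carrier_mat_adjoint[OF X]] by (metis adjoint_adjoint_mat)
qed

lemma eigenvalue_cnj:
  assumes "is_eigenvalue N L lam"
  shows "is_eigenvalue N L (cnj lam)"
proof -
  obtain X where X: "X \<in> carrier_mat N N" "X \<noteq> 0\<^sub>m N N" "L X = lam \<cdot>\<^sub>m X"
    using assms by (auto simp: is_eigenvalue_def)
  have UX: "unitary_conj U0 X \<in> carrier_mat N N"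
    using linear_on_mats_carrier[OF linear_on_mats_unitary_conj[OF U0_carrier] X(1)] .
  have "L (mat_adjoint X) = D (mat_adjoint (unitary_conj U0 X))"
    by (simp add: L_eq unitary_conj_adjoint[OF U0_carrier X(1)])
  also have "\<dots> = mat_adjoint (L X)"
    by (simp add: L_eq D_adjoint[OF UX])
  also have "\<dots> = cnj lam \<cdot>\<^sub>m mat_adjoint X"
    using X by (simp add: adjoint_smult_mat[of _ N N])
  finally have "L (mat_adjoint X) = cnj lam \<cdot>\<^sub>m mat_adjoint X" .
  moreover have "mat_adjoint X \<noteq> 0\<^sub>m N N"
    using X(1,2) by (metis adjoint_adjoint_mat adjoint_zero_mat)
  ultimately show ?thesis
    using X(1) by (auto simp: is_eigenvalue_def)
qed

lemma singular_values_L: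
  "singular_values N L = image_mset (\<lambda>(\<mu>, \<nu>). ctilde N \<epsilon> \<mu> \<nu>) (mset_set ({..<N} \<times> {..<N}))"
proof (rule singular_values_eqI)
  show "\<forall>s\<in>#image_mset (\<lambda>(\<mu>, \<nu>). ctilde N \<epsilon> \<mu> \<nu>) (mset_set ({..<N} \<times> {..<N})). 0 \<le> s"
    by (auto simp: ctilde_nonneg)
  have "mat_adjoint (rep_map N L) * rep_map N L = unitary_conj F (mat_adjoint G) * unitary_conj F G"
    unfolding rep_map_L by (simp add: unitary_conj_adjoint[of F "N * N" G])
  also have "\<dots> = unitary_conj F (mat_adjoint G * G)"
    by (rule unitary_conj_mult[OF unitary_F]) simp_all
  finally have "mat_adjoint (rep_map N L) * rep_map N L = unitary_conj F (mat_adjoint G * G)" .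
  then have "char_poly (mat_adjoint (rep_map N L) * rep_map N L) = char_poly (mat_adjoint G * G)"
    using similar_mat_unitary_conj[OF unitary_F] by (simp add: char_poly_similar mult_carrier_mat[of _ "N * N" "N * N" _ "N * N"])
  also have "\<dots> = (\<Prod>k<N * N. [:- complex_of_real ((c k)\<^sup>2), 1:])"
    by (rule char_poly_adjoint_G_mult_G)
  also have "\<dots> = (\<Prod>s\<in>#image_mset (\<lambda>(\<mu>, \<nu>). ctilde N \<epsilon> \<mu> \<nu>) (mset_set ({..<N} \<times> {..<N})).
      [:- complex_of_real (s\<^sup>2), 1:])"
    using prod.reindex_bij_betw[OF bij_betw_div_mod, of "\<lambda>(\<mu>, \<nu>). [:- complex_of_real ((ctilde N \<epsilon> \<mu> \<nu>)\<^sup>2), 1:]"]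
    by (simp add: prod_unfold_prod_mset multiset.map_comp comp_def case_prod_beta)
  finally show "char_poly (mat_adjoint (rep_map N L) * rep_map N L) = \<dots>" .
qed

lemma eigenvector_G:
  assumes "is_eigenvalue N L lam"
  obtains y where "eigenvector G y lam"
proof -
  have "eigenvalue (rep_map N L) lam"
    using eigenvalue_rep_map[OF linear_L assms] .
  then have "eigenvalue G lam"
    using char_poly_similar[OF similar_rep_map_L]
    by (simp add: eigenvalue_root_char_poly[OF rep_map_carrier] eigenvalue_root_char_poly[OF G_carrier])
  then show ?thesis
    using that by (auto simp: eigenvalue_def)
qed

lemma eigenvalue_bounds:
  assumes "is_eigenvalue N L lam" "lam \<noteq> 1"
  shows "exp (- (\<epsilon> * real N / pi)\<^sup>2) \<le> cmod lam"
    and "cmod lam \<le> exp (- (1/2) * (\<epsilon> * real N / pi)\<^sup>2 * (sin (pi / real N))\<^sup>2)"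
proof -
  obtain y where y: "eigenvector G y lam"
    using eigenvector_G[OF assms(1)] .
  show "exp (- (\<epsilon> * real N / pi)\<^sup>2) \<le> cmod lam"
    using y by (rule eigenvalue_lower_bound) (simp_all add: ctilde_lower_bound)
  show "cmod lam \<le> exp (- (1/2) * (\<epsilon> * real N / pi)\<^sup>2 * (sin (pi / real N))\<^sup>2)"
    using y eigenvector_index_0[OF y assms(2)] _ c_le_gap by (rule eigenvalue_upper_bound) simp
qed

end

theorem mainTheorem2:
  fixes N :: nat and \<epsilon> :: real and U0 :: "complex mat"
    and D L :: "complex mat \<Rightarrow> complex mat"
  assumes N2: "N \<ge> 2"
    and eps: "\<epsilon> > 0"
    and U0: "unitary_mat N U0"
    and Dlin: "linear_on_mats N D"
    and Dbasis: "\<forall>\<mu> < N. \<forall>\<nu> < N.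
        D (transl N \<mu> \<nu>) = complex_of_real (ctilde N \<epsilon> \<mu> \<nu>) \<cdot>\<^sub>m transl N \<mu> \<nu>"
    and Ldef: "\<forall>\<rho>. L \<rho> = D (U0 * \<rho> * mat_adjoint U0)"
  shows "L ((1 / of_nat N) \<cdot>\<^sub>m 1\<^sub>m N) = (1 / of_nat N) \<cdot>\<^sub>m 1\<^sub>m N
       \<and> alg_mult N L 1 = 1
       \<and> (\<forall>lam. is_eigenvalue N L lam \<longrightarrow> is_eigenvalue N L (cnj lam))
       \<and> singular_values N L =
           image_mset (\<lambda>(\<mu>, \<nu>). ctilde N \<epsilon> \<mu> \<nu>) (mset_set ({..<N} \<times> {..<N}))
       \<and> (\<forall>lam. is_eigenvalue N L lam \<and> lam \<noteq> 1 \<longrightarrow>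
            exp (- (\<epsilon> * real N / pi)\<^sup>2) \<le> cmod lam \<and>
            cmod lam \<le> exp (- (1/2) * (\<epsilon> * real N / pi)\<^sup>2 * (sin (pi / real N))\<^sup>2))"
proof -
  interpret noisy_unitary_map N \<epsilon> U0 D L
    using assms by unfold_locales
  show ?thesis
    using L_fixes_maximally_mixed alg_mult_L_1 eigenvalue_cnj singular_values_L eigenvalue_bounds
    by blast
qed

end
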